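(* On the algebra $\mathcal O^\star(\mathbb C^\times)$ of analytic functionals on $\mathbb C^\times=\mathbb C\setminus\{0\}$ (with convolution), the seminorms $\|\alpha\|_N=\sum_{|n|\le N}|\alpha_n|$, $N\in\mathbb N$, are continuous and submultiplicative, and they form a fundamental system among all continuous submultiplicative seminorms: for every continuous submultiplicative seminorm $p$ on $\mathcal O^\star(\mathbb C^\times)$ there exist $N\in\mathbb N$ and $M>0$ with $p(\alpha)\le M\|\alpha\|_N$ for all $\alpha$.
   Context: $\mathcal O(\mathbb C^\times)$: holomorphic functions on $\mathbb C^\times$ with topology of uniform convergence on compacts; $\mathcal O^\star(\mathbb C^\times)$: its dual with topology of uniform convergence on compact subsets of $\mathcal O(\mathbb C^\times)$. For $\alpha\in\mathcal O^\star(\mathbb C^\times)$ and $n\in\mathbb Z$, $\alpha_n=\alpha(z^n)$ where $z^n(x)=x^n$. Convolution with respect to the multiplicative group: $(\alpha*\beta)(u)=\alpha(s\mapsto\beta(t\mapsto u(st)))$; in coefficients $(\alpha*\beta)_n=\alpha_n\beta_n$. *)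

theory Defs
  imports "HOL-Analysis.Analysis"
begin

text \<open>The space O(C^x) of holomorphic functions on C minus 0 (values at 0 are irrelevant).\<close>
definition OC :: "(complex \<Rightarrow> complex) set" where
  "OC = {f. f holomorphic_on (- {0})}"

definition OC_top :: "(complex \<Rightarrow> complex) topology" where
  "OC_top = topology (\<lambda>U. U \<subseteq> OC \<and>
     (\<forall>f\<in>U. \<exists>K e. compact K \<and> K \<subseteq> - {0} \<and> e > 0 \<and>
        {g\<in>OC. \<forall>z\<in>K. cmod (g z - f z) \<le> e} \<subseteq> U))"

text \<open>The dual O*(C^x): continuous linear functionals on OC, normalised to be 0 off OC.\<close>
definition OCdual :: "((complex \<Rightarrow> complex) \<Rightarrow> complex) set" where
  "OCdual = {\<alpha>. (\<forall>f\<in>OC. \<forall>g\<in>OC. \<alpha> (\<lambda>x. f x + g x) = \<alpha> f + \<alpha> g)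
      \<and> (\<forall>c. \<forall>f\<in>OC. \<alpha> (\<lambda>x. c * f x) = c * \<alpha> f)
      \<and> continuous_map OC_top euclidean \<alpha>
      \<and> (\<forall>f. f \<notin> OC \<longrightarrow> \<alpha> f = 0)}"

definition OCdual_top :: "((complex \<Rightarrow> complex) \<Rightarrow> complex) topology" where
  "OCdual_top = topology (\<lambda>U. U \<subseteq> OCdual \<and>
     (\<forall>\<alpha>\<in>U. \<exists>B e. compactin OC_top B \<and> e > 0 \<and>
        {\<beta>\<in>OCdual. \<forall>f\<in>B. cmod (\<beta> f - \<alpha> f) \<le> e} \<subseteq> U))"

definition dadd :: "((complex \<Rightarrow> complex) \<Rightarrow> complex) \<Rightarrow> ((complex \<Rightarrow> complex) \<Rightarrow> complex)
    \<Rightarrow> ((complex \<Rightarrow> complex) \<Rightarrow> complex)" where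
  "dadd \<alpha> \<beta> = (\<lambda>f. \<alpha> f + \<beta> f)"

definition dscale :: "complex \<Rightarrow> ((complex \<Rightarrow> complex) \<Rightarrow> complex) \<Rightarrow> ((complex \<Rightarrow> complex) \<Rightarrow> complex)" where
  "dscale c \<alpha> = (\<lambda>f. c * \<alpha> f)"

definition conv :: "((complex \<Rightarrow> complex) \<Rightarrow> complex) \<Rightarrow> ((complex \<Rightarrow> complex) \<Rightarrow> complex)
    \<Rightarrow> ((complex \<Rightarrow> complex) \<Rightarrow> complex)" where
  "conv \<alpha> \<beta> = (\<lambda>u. if u \<in> OC then \<alpha> (\<lambda>s. \<beta> (\<lambda>t. u (s * t))) else 0)"

definition coef :: "((complex \<Rightarrow> complex) \<Rightarrow> complex) \<Rightarrow> int \<Rightarrow> complex" where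
  "coef \<alpha> n = \<alpha> (\<lambda>x. x powi n)"

definition normN :: "nat \<Rightarrow> ((complex \<Rightarrow> complex) \<Rightarrow> complex) \<Rightarrow> real" where
  "normN N \<alpha> = (\<Sum>n\<in>{- int N..int N}. cmod (coef \<alpha> n))"

definition dual_seminorm :: "(((complex \<Rightarrow> complex) \<Rightarrow> complex) \<Rightarrow> real) \<Rightarrow> bool" where
  "dual_seminorm p \<longleftrightarrow>
     (\<forall>\<alpha>\<in>OCdual. p \<alpha> \<ge> 0)
   \<and> (\<forall>\<alpha>\<in>OCdual. \<forall>\<beta>\<in>OCdual. p (dadd \<alpha> \<beta>) \<le> p \<alpha> + p \<beta>)
   \<and> (\<forall>c. \<forall>\<alpha>\<in>OCdual. p (dscale c \<alpha>) = cmod c * p \<alpha>)"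

definition submultiplicative :: "(((complex \<Rightarrow> complex) \<Rightarrow> complex) \<Rightarrow> real) \<Rightarrow> bool" where
  "submultiplicative p \<longleftrightarrow> (\<forall>\<alpha>\<in>OCdual. \<forall>\<beta>\<in>OCdual. p (conv \<alpha> \<beta>) \<le> p \<alpha> * p \<beta>)"

definition cont_seminorm :: "(((complex \<Rightarrow> complex) \<Rightarrow> complex) \<Rightarrow> real) \<Rightarrow> bool" where
  "cont_seminorm p \<longleftrightarrow> continuous_map OCdual_top euclideanreal p"

end

theory Submission
  imports Defs "HOL-Complex_Analysis.Complex_Analysis"
begin

(*
  A functional alpha in OCdual is bounded by a multiple of the supremum over some compact
  K in - {0}; expanding f in its Laurent series on an annulus around K therefore gives
  alpha = (SUM n. alpha_n eps_n), where eps_n = coeff_functional n takes the n-th Laurent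
  coefficient, with an error that is geometrically small uniformly on compact subsets of OC.
  A continuous seminorm p is dominated by the supremum over a compact subset of OC, and
  Cauchy's estimates give p eps_n <= M (1/2)^|n|. Since eps_n * eps_n = eps_n,
  submultiplicativity forces p eps_n = 0 or p eps_n >= 1. Hence p eps_n = 0 for |n| > N, and
  p alpha <= (SUM |n| <= N. |alpha_n| p eps_n) <= M ||alpha||_N.
*)

lemma istopology_neighbourhood_base:
  assumes Pu: "\<And>K1 K2. P K1 \<Longrightarrow> P K2 \<Longrightarrow> P (K1 \<union> K2)"
    and Nm: "\<And>K1 K2 e1 e2 f. N (K1 \<union> K2) (min e1 e2) f \<subseteq> N K1 e1 f \<inter> N K2 e2 f"
  shows "istopology (\<lambda>U. U \<subseteq> X \<and> (\<forall>f\<in>U. \<exists>K e. P K \<and> (e::real) > 0 \<and> N K e f \<subseteq> U))"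
  unfolding istopology_def
proof (rule conjI; intro allI impI)
  fix S T
  assume S: "S \<subseteq> X \<and> (\<forall>f\<in>S. \<exists>K e. P K \<and> (e::real) > 0 \<and> N K e f \<subseteq> S)"
    and T: "T \<subseteq> X \<and> (\<forall>f\<in>T. \<exists>K e. P K \<and> (e::real) > 0 \<and> N K e f \<subseteq> T)"
  have S1: "S \<subseteq> X" and S2: "\<And>f. f \<in> S \<Longrightarrow> \<exists>K e. P K \<and> (e::real) > 0 \<and> N K e f \<subseteq> S"
    using S by auto
  have T1: "T \<subseteq> X" and T2: "\<And>f. f \<in> T \<Longrightarrow> \<exists>K e. P K \<and> (e::real) > 0 \<and> N K e f \<subseteq> T"
    using T by auto
  show "S \<inter> T \<subseteq> X \<and> (\<forall>f\<in>S \<inter> T. \<exists>K e. P K \<and> (e::real) > 0 \<and> N K e f \<subseteq> S \<inter> T)"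
  proof (intro conjI ballI)
    show "S \<inter> T \<subseteq> X" using S1 by blast
    fix f assume f: "f \<in> S \<inter> T"
    obtain K1 e1 where 1: "P K1" "(e1::real) > 0" "N K1 e1 f \<subseteq> S" using S2 f by blast
    obtain K2 e2 where 2: "P K2" "(e2::real) > 0" "N K2 e2 f \<subseteq> T" using T2 f by blast
    have "N (K1 \<union> K2) (min e1 e2) f \<subseteq> S \<inter> T" using Nm[of K1 K2 e1 e2 f] 1(3) 2(3) by blast
    then show "\<exists>K e. P K \<and> (e::real) > 0 \<and> N K e f \<subseteq> S \<inter> T"
      using Pu[OF 1(1) 2(1)] 1(2) 2(2) by (intro exI[of _ "K1 \<union> K2"] exI[of _ "min e1 e2"]) simp
  qed
next
  fix KK
  assume H: "\<forall>U\<in>KK. U \<subseteq> X \<and> (\<forall>f\<in>U. \<exists>K e. P K \<and> (e::real) > 0 \<and> N K e f \<subseteq> U)"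
  show "\<Union>KK \<subseteq> X \<and> (\<forall>f\<in>\<Union>KK. \<exists>K e. P K \<and> (e::real) > 0 \<and> N K e f \<subseteq> \<Union>KK)"
  proof (intro conjI ballI)
    show "\<Union>KK \<subseteq> X" using H by blast
    fix f assume "f \<in> \<Union>KK"
    then obtain U where U: "U \<in> KK" "f \<in> U" by blast
    then have "\<exists>K e. P K \<and> (e::real) > 0 \<and> N K e f \<subseteq> U" using H by blast
    then obtain K e where "P K" "(e::real) > 0" "N K e f \<subseteq> U" by blast
    then show "\<exists>K e. P K \<and> (e::real) > 0 \<and> N K e f \<subseteq> \<Union>KK" using U by blast
  qed
qed

lemma openin_OC_top: "openin OC_top U \<longleftrightarrow> U \<subseteq> OC \<and>
     (\<forall>f\<in>U. \<exists>K e. compact K \<and> K \<subseteq> - {0} \<and> e > 0 \<and>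
        {g\<in>OC. \<forall>z\<in>K. cmod (g z - f z) \<le> e} \<subseteq> U)"
proof -
  have "istopology (\<lambda>U. U \<subseteq> OC \<and> (\<forall>f\<in>U. \<exists>K e. (compact K \<and> K \<subseteq> - {0}) \<and> (e::real) > 0 \<and>
        {g\<in>OC. \<forall>z\<in>K. cmod (g z - f z) \<le> e} \<subseteq> U))"
    by (rule istopology_neighbourhood_base) (auto simp: compact_Un)
  then have "istopology (\<lambda>U. U \<subseteq> OC \<and> (\<forall>f\<in>U. \<exists>K e. compact K \<and> K \<subseteq> - {0} \<and> e > 0 \<and>
        {g\<in>OC. \<forall>z\<in>K. cmod (g z - f z) \<le> e} \<subseteq> U))"
    by (simp only: conj_assoc)
  from topology_inverse'[OF this] show ?thesis
    unfolding OC_top_def by simp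
qed

lemma topspace_OC_top: "topspace OC_top = OC"
proof
  show "topspace OC_top \<subseteq> OC" unfolding topspace_def using openin_OC_top by auto
  have "openin OC_top OC" unfolding openin_OC_top
  proof (intro conjI ballI)
    fix f assume "f \<in> OC"
    show "\<exists>K e. compact K \<and> K \<subseteq> - {0} \<and> e > 0 \<and> {g\<in>OC. \<forall>z\<in>K. cmod (g z - f z) \<le> e} \<subseteq> OC"
      by (rule exI[of _ "{}"], rule exI[of _ "1::real"]) auto
  qed simp
  then show "OC \<subseteq> topspace OC_top" by (simp add: openin_subset)
qed

lemma openin_OCdual_top: "openin OCdual_top U \<longleftrightarrow> U \<subseteq> OCdual \<and>
     (\<forall>\<alpha>\<in>U. \<exists>B e. compactin OC_top B \<and> e > 0 \<and>
        {\<beta>\<in>OCdual. \<forall>f\<in>B. cmod (\<beta> f - \<alpha> f) \<le> e} \<subseteq> U)"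
proof -
  have "istopology (\<lambda>U. U \<subseteq> OCdual \<and> (\<forall>\<alpha>\<in>U. \<exists>B e. compactin OC_top B \<and> (e::real) > 0 \<and>
        {\<beta>\<in>OCdual. \<forall>f\<in>B. cmod (\<beta> f - \<alpha> f) \<le> e} \<subseteq> U))"
    by (rule istopology_neighbourhood_base) (auto simp: compactin_Un)
  from topology_inverse'[OF this] show ?thesis
    unfolding OCdual_top_def by simp
qed

lemma topspace_OCdual_top: "topspace OCdual_top = OCdual"
proof
  show "topspace OCdual_top \<subseteq> OCdual" unfolding topspace_def using openin_OCdual_top by auto
  have "openin OCdual_top OCdual" unfolding openin_OCdual_top
  proof (intro conjI ballI)
    fix a assume "a \<in> OCdual"
    show "\<exists>B e. compactin OC_top B \<and> e > 0 \<and> {\<beta>\<in>OCdual. \<forall>f\<in>B. cmod (\<beta> f - a f) \<le> e} \<subseteq> OCdual"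
      by (rule exI[of _ "{}"], rule exI[of _ "1::real"]) auto
  qed simp
  then show "OCdual \<subseteq> topspace OCdual_top" by (simp add: openin_subset)
qed

lemma OC_holomorphic: "f \<in> OC \<Longrightarrow> f holomorphic_on - {0}"
  by (simp add: OC_def)

lemma OC_powi [simp]: "(\<lambda>x. x powi n) \<in> OC"
  unfolding OC_def by (auto intro!: holomorphic_intros)

lemma OC_const [simp]: "(\<lambda>x. c) \<in> OC"
  unfolding OC_def by (auto intro!: holomorphic_intros)

lemma OC_add: "f \<in> OC \<Longrightarrow> g \<in> OC \<Longrightarrow> (\<lambda>x. f x + g x) \<in> OC"
  unfolding OC_def by (auto intro!: holomorphic_intros)

lemma OC_diff: "f \<in> OC \<Longrightarrow> g \<in> OC \<Longrightarrow> (\<lambda>x. f x - g x) \<in> OC"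
  unfolding OC_def by (auto intro!: holomorphic_intros)

lemma OC_cmult: "f \<in> OC \<Longrightarrow> (\<lambda>x. c * f x) \<in> OC"
  unfolding OC_def by (auto intro!: holomorphic_intros)

lemma OC_sum: "(\<And>i. i \<in> I \<Longrightarrow> F i \<in> OC) \<Longrightarrow> (\<lambda>x. \<Sum>i\<in>I. F i x) \<in> OC"
  unfolding OC_def by (auto intro!: holomorphic_intros)

lemma OC_compose_scale:
  assumes "f \<in> OC"
  shows "(\<lambda>t. f (s * t)) \<in> OC"
proof (cases "s = 0")
  case False
  have "(f \<circ> (\<lambda>t. s * t)) holomorphic_on - {0}"
    by (rule holomorphic_on_compose_gen[OF _ OC_holomorphic[OF assms]])
      (use False in \<open>auto intro!: holomorphic_intros\<close>)
  then show ?thesis by (simp add: OC_def o_def)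
qed simp

lemma OC_continuous_on: "f \<in> OC \<Longrightarrow> K \<subseteq> - {0} \<Longrightarrow> continuous_on K f"
  by (meson OC_holomorphic holomorphic_on_imp_continuous_on holomorphic_on_subset)

lemma OC_bounded_on_compact:
  assumes "f \<in> OC" "compact K" "K \<subseteq> - {0}"
  shows "\<exists>b. \<forall>z\<in>K. cmod (f z) \<le> b"
  using compact_continuous_image[OF OC_continuous_on[OF assms(1,3)] assms(2)]
  by (meson compact_imp_bounded bounded_iff image_eqI)

definition linear_on_OC :: "((complex \<Rightarrow> complex) \<Rightarrow> complex) \<Rightarrow> bool" where
  "linear_on_OC \<alpha> \<longleftrightarrow> (\<forall>f\<in>OC. \<forall>g\<in>OC. \<alpha> (\<lambda>x. f x + g x) = \<alpha> f + \<alpha> g)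
      \<and> (\<forall>c. \<forall>f\<in>OC. \<alpha> (\<lambda>x. c * f x) = c * \<alpha> f)"

lemma OCdual_linear_on_OC: "\<alpha> \<in> OCdual \<Longrightarrow> linear_on_OC \<alpha>"
  by (simp add: OCdual_def linear_on_OC_def)

lemma linear_on_OC_add:
  "linear_on_OC \<alpha> \<Longrightarrow> f \<in> OC \<Longrightarrow> g \<in> OC \<Longrightarrow> \<alpha> (\<lambda>x. f x + g x) = \<alpha> f + \<alpha> g"
  unfolding linear_on_OC_def by blast

lemma linear_on_OC_cmult: "linear_on_OC \<alpha> \<Longrightarrow> f \<in> OC \<Longrightarrow> \<alpha> (\<lambda>x. c * f x) = c * \<alpha> f"
  unfolding linear_on_OC_def by blast

lemma linear_on_OC_diff:
  assumes "linear_on_OC \<alpha>" "f \<in> OC" "g \<in> OC"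
  shows "\<alpha> (\<lambda>x. f x - g x) = \<alpha> f - \<alpha> g"
  using linear_on_OC_add[OF assms(1,2) OC_cmult[OF assms(3)], of "-1"]
    linear_on_OC_cmult[OF assms(1,3), of "-1"]
  by simp

lemma linear_on_OC_zero: "linear_on_OC \<alpha> \<Longrightarrow> \<alpha> (\<lambda>x. 0) = 0"
  using linear_on_OC_cmult[OF _ OC_const, of \<alpha> 0 0] by simp

lemma linear_on_OC_sum:
  assumes "linear_on_OC \<alpha>" "finite I" "\<And>i. i \<in> I \<Longrightarrow> F i \<in> OC"
  shows "\<alpha> (\<lambda>x. \<Sum>i\<in>I. F i x) = (\<Sum>i\<in>I. \<alpha> (F i))"
  using assms(2,3)
proof (induction I rule: finite_induct)
  case empty
  then show ?case using linear_on_OC_zero[OF assms(1)] by simp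
next
  case (insert i I)
  then show ?case
    using linear_on_OC_add[OF assms(1) _ OC_sum[of I F], of "F i"] by simp
qed

lemma continuous_map_OC_topI:
  assumes "\<And>f \<epsilon>. f \<in> OC \<Longrightarrow> \<epsilon> > 0 \<Longrightarrow> \<exists>K e. compact K \<and> K \<subseteq> - {0} \<and> e > 0 \<and>
       (\<forall>g\<in>OC. (\<forall>z\<in>K. cmod (g z - f z) \<le> e) \<longrightarrow> cmod (\<alpha> g - \<alpha> f) < \<epsilon>)"
  shows "continuous_map OC_top euclidean \<alpha>"
  unfolding continuous_map_def
proof (intro conjI allI impI)
  show "\<alpha> \<in> topspace OC_top \<rightarrow> topspace euclidean" by simp
  fix U :: "complex set"
  assume "openin euclidean U"
  then have "open U" by simp
  show "openin OC_top {x \<in> topspace OC_top. \<alpha> x \<in> U}"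
    unfolding openin_OC_top topspace_OC_top
  proof (intro conjI ballI)
    fix f assume f: "f \<in> {x \<in> OC. \<alpha> x \<in> U}"
    then obtain \<epsilon> where \<epsilon>: "\<epsilon> > 0" "ball (\<alpha> f) \<epsilon> \<subseteq> U"
      using \<open>open U\<close> open_contains_ball by blast
    then obtain K e where "compact K" "K \<subseteq> - {0}" "e > 0"
      and close: "\<forall>g\<in>OC. (\<forall>z\<in>K. cmod (g z - f z) \<le> e) \<longrightarrow> cmod (\<alpha> g - \<alpha> f) < \<epsilon>"
      using assms[of f \<epsilon>] f by blast
    moreover have "{g \<in> OC. \<forall>z\<in>K. cmod (g z - f z) \<le> e} \<subseteq> {x \<in> OC. \<alpha> x \<in> U}"
      using close \<epsilon>(2) by (force simp: dist_norm norm_minus_commute)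
    ultimately show "\<exists>K e. compact K \<and> K \<subseteq> - {0} \<and> e > 0 \<and>
        {g \<in> OC. \<forall>z\<in>K. cmod (g z - f z) \<le> e} \<subseteq> {x \<in> OC. \<alpha> x \<in> U}"
      by blast
  qed auto
qed

lemma continuous_map_OC_top_if_bounded:
  assumes "linear_on_OC \<alpha>" "compact K" "K \<subseteq> - {0}" "C \<ge> 0"
    and bound: "\<And>g t. g \<in> OC \<Longrightarrow> t \<ge> 0 \<Longrightarrow> (\<forall>z\<in>K. cmod (g z) \<le> t) \<Longrightarrow> cmod (\<alpha> g) \<le> C * t"
  shows "continuous_map OC_top euclidean \<alpha>"
proof (rule continuous_map_OC_topI)
  fix f and \<epsilon> :: real
  assume f: "f \<in> OC" and \<epsilon>: "\<epsilon> > 0"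
  define e where "e = \<epsilon> / (C + 1)"
  have e: "e > 0" "C * e < \<epsilon>"
    using \<epsilon> assms(4) by (simp_all add: e_def field_simps)
  have "cmod (\<alpha> g - \<alpha> f) < \<epsilon>" if "g \<in> OC" "\<forall>z\<in>K. cmod (g z - f z) \<le> e" for g
    using bound[OF OC_diff[OF that(1) f], of e] linear_on_OC_diff[OF assms(1) that(1) f] that(2) e
    by simp
  then show "\<exists>K e. compact K \<and> K \<subseteq> - {0} \<and> e > 0 \<and>
       (\<forall>g\<in>OC. (\<forall>z\<in>K. cmod (g z - f z) \<le> e) \<longrightarrow> cmod (\<alpha> g - \<alpha> f) < \<epsilon>)"
    using assms(2,3) e(1) by blast
qed

lemma OCdual_bounded_on_compact:
  assumes "\<alpha> \<in> OCdual"
  obtains K C where "compact K" "K \<subseteq> - {0}" "C > 0"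
    "\<And>g t. g \<in> OC \<Longrightarrow> t \<ge> 0 \<Longrightarrow> (\<forall>z\<in>K. cmod (g z) \<le> t) \<Longrightarrow> cmod (\<alpha> g) \<le> C * t"
proof -
  have lin: "linear_on_OC \<alpha>"
    using OCdual_linear_on_OC[OF assms] .
  have "openin OC_top {f \<in> topspace OC_top. \<alpha> f \<in> ball 0 1}"
    using assms unfolding OCdual_def
    by (intro openin_continuous_map_preimage[of _ euclidean]) simp_all
  then have "openin OC_top {f \<in> OC. \<alpha> f \<in> ball 0 1}"
    by (simp add: topspace_OC_top)
  moreover have "(\<lambda>x. 0) \<in> {f \<in> OC. \<alpha> f \<in> ball 0 1}"
    using linear_on_OC_zero[OF lin] by simp
  ultimately have "\<exists>K e. compact K \<and> K \<subseteq> - {0} \<and> e > 0 \<and>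
      {g\<in>OC. \<forall>z\<in>K. cmod (g z - 0) \<le> e} \<subseteq> {f \<in> OC. \<alpha> f \<in> ball 0 1}"
    by (rule openin_OC_top[THEN iffD1, THEN conjunct2, rule_format])
  then obtain K e where K: "compact K" "K \<subseteq> - {0}" and "e > 0"
    and ball: "{g\<in>OC. \<forall>z\<in>K. cmod (g z - 0) \<le> e} \<subseteq> {f \<in> OC. \<alpha> f \<in> ball 0 1}"
    by blast
  have rescaled: "cmod (\<alpha> g) \<le> s / e" if g: "g \<in> OC" "\<forall>z\<in>K. cmod (g z) \<le> s" "s > 0" for g s
  proof -
    define c where "c = e / s"
    have "c > 0"
      using g(3) \<open>e > 0\<close> by (simp add: c_def)
    have "cmod (c * g z - 0) \<le> e" if "z \<in> K" for z
    proof -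
      have "cmod (c * g z) \<le> c * s"
        using g(2) \<open>c > 0\<close> that by (simp add: norm_mult)
      then show ?thesis
        using g(3) by (simp add: c_def)
    qed
    then have "(\<lambda>x. c * g x) \<in> {g\<in>OC. \<forall>z\<in>K. cmod (g z - 0) \<le> e}"
      using OC_cmult[OF g(1)] by simp
    then have "cmod (\<alpha> (\<lambda>x. c * g x)) < 1"
      using subsetD[OF ball] by simp
    then have "c * cmod (\<alpha> g) < 1"
      using \<open>c > 0\<close> by (simp add: linear_on_OC_cmult[OF lin g(1)] norm_mult)
    then show ?thesis
      using \<open>e > 0\<close> g(3) by (simp add: c_def field_simps)
  qed
  have bound: "cmod (\<alpha> g) \<le> (1 / e) * t" if g: "g \<in> OC" "t \<ge> 0" "\<forall>z\<in>K. cmod (g z) \<le> t" for g t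
  proof (rule field_le_epsilon)
    fix \<delta> :: real
    assume "\<delta> > 0"
    have "\<delta> * e > 0"
      using \<open>\<delta> > 0\<close> \<open>e > 0\<close> by simp
    then have "cmod (\<alpha> g) \<le> (t + \<delta> * e) / e"
      using g by (intro rescaled) (auto simp: add_increasing2 less_imp_le)
    also have "\<dots> = (1 / e) * t + \<delta>"
      using \<open>e > 0\<close> by (simp add: field_simps)
    finally show "cmod (\<alpha> g) \<le> (1 / e) * t + \<delta>" .
  qed
  show ?thesis
    by (rule that[OF K _ bound]) (use \<open>e > 0\<close> in simp_all)
qed

lemma compactin_OC_top_bounded_on_compact:
  assumes B: "compactin OC_top B" and K: "compact K" "K \<subseteq> - {0}"
  shows "\<exists>M. \<forall>f\<in>B. \<forall>z\<in>K. cmod (f z) \<le> M"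
proof -
  \<comment> \<open>\<open>B\<close> is covered by the increasing open sets \<open>V n\<close>; compactness leaves finitely many\<close>
  define V where "V n = {f\<in>OC. \<exists>d>0. \<forall>z\<in>K. cmod (f z) \<le> real n - d}" for n :: nat
  have op: "openin OC_top (V n)" for n
    unfolding openin_OC_top
  proof (intro conjI ballI)
    show "V n \<subseteq> OC" by (auto simp: V_def)
    fix f assume "f \<in> V n"
    then obtain d where f: "f \<in> OC" "d > 0" "\<forall>z\<in>K. cmod (f z) \<le> real n - d" by (auto simp: V_def)
    have "{g \<in> OC. \<forall>z\<in>K. cmod (g z - f z) \<le> d/2} \<subseteq> V n"
    proof
      fix g assume g: "g \<in> {g \<in> OC. \<forall>z\<in>K. cmod (g z - f z) \<le> d/2}"
      have "\<forall>z\<in>K. cmod (g z) \<le> real n - d/2"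
      proof
        fix z assume z: "z \<in> K"
        have "cmod (g z) \<le> cmod (f z) + cmod (g z - f z)" by (metis norm_triangle_sub add.commute)
        then show "cmod (g z) \<le> real n - d/2" using g f(3) z by force
      qed
      then show "g \<in> V n" using g f(2) unfolding V_def by (auto intro!: exI[of _ "d/2"])
    qed
    then show "\<exists>K' e. compact K' \<and> K' \<subseteq> - {0} \<and> e > 0 \<and> {g \<in> OC. \<forall>z\<in>K'. cmod (g z - f z) \<le> e} \<subseteq> V n"
      using K f(2) by (intro exI[of _ K] exI[of _ "d/2"]) auto
  qed
  have BOC: "B \<subseteq> OC" using compactin_subset_topspace[OF B] by (simp add: topspace_OC_top)
  have cov: "B \<subseteq> \<Union>(range V)"
  proof
    fix f assume "f \<in> B"
    then have f: "f \<in> OC" using BOC by blast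
    obtain b where b: "\<forall>z\<in>K. cmod (f z) \<le> b" using OC_bounded_on_compact[OF f K] by blast
    have "f \<in> V (nat \<lceil>b\<rceil> + 1)" unfolding V_def
    proof (intro CollectI conjI exI[of _ 1])
      show "\<forall>z\<in>K. cmod (f z) \<le> real (nat \<lceil>b\<rceil> + 1) - 1"
        using b by (smt (verit, best) of_nat_1 of_nat_add real_nat_ceiling_ge)
    qed (use f in auto)
    then show "f \<in> \<Union>(range V)" by blast
  qed
  have opr: "\<forall>U\<in>range V. openin OC_top U" using op by blast
  obtain F where F: "finite F" "F \<subseteq> range V" "B \<subseteq> \<Union>F"
    using B[unfolded compactin_def, THEN conjunct2, rule_format, of "range V"] opr cov by blast
  obtain N where N: "finite N" "F = V ` N" using finite_subset_image[OF F(1,2)] by blast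
  show ?thesis
  proof (intro exI[of _ "real (\<Sum>N)"] ballI)
    fix f z assume f: "f \<in> B" and z: "z \<in> K"
    obtain n where n: "n \<in> N" "f \<in> V n" using F(3) f N(2) by blast
    then obtain d where "d > 0" "cmod (f z) \<le> real n - d" using z by (auto simp: V_def)
    moreover have "n \<le> \<Sum>N" using member_le_sum[of n N "\<lambda>x. x"] n(1) N(1) by simp
    ultimately show "cmod (f z) \<le> real (\<Sum>N)" by linarith
  qed
qed

definition laurent_coeff :: "(complex \<Rightarrow> complex) \<Rightarrow> int \<Rightarrow> complex" where
  "laurent_coeff f n = contour_integral (circlepath 0 1) (\<lambda>w. f w * w powi (- n - 1)) / (2 * pi * \<i>)"

lemma OC_holomorphic_UNIV: "f \<in> OC \<Longrightarrow> f holomorphic_on (UNIV - {0})"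
  by (simp add: OC_def Compl_eq_Diff_UNIV)

lemma laurent_coeff_has_contour_integral:
  assumes f: "f \<in> OC" and r: "r > 0"
  shows "((\<lambda>w. f w * w powi (- n - 1)) has_contour_integral (2 * pi * \<i> * laurent_coeff f n)) (circlepath 0 r)"
proof -
  let ?g = "\<lambda>w. f w * w powi (- n - 1)"
  have hol: "?g holomorphic_on (UNIV - {0})"
    using OC_holomorphic_UNIV[OF f] by (auto intro!: holomorphic_intros)
  have "?g contour_integrable_on circlepath 0 r \<and> contour_integral (circlepath 0 r) ?g = contour_integral (circlepath 0 1) ?g"
  proof (cases "r \<le> 1")
    case True
    show ?thesis using contour_integral_circlepath_eq[OF open_UNIV hol r True subset_UNIV] by simp
  next
    case False
    then have "1 \<le> r" by simp
    show ?thesis using contour_integral_circlepath_eq[OF open_UNIV hol _ \<open>1 \<le> r\<close> subset_UNIV] by simp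
  qed
  moreover have "contour_integral (circlepath 0 1) ?g = 2 * pi * \<i> * laurent_coeff f n"
    unfolding laurent_coeff_def by simp
  ultimately show ?thesis by (metis has_contour_integral_integral)
qed

lemma norm_laurent_coeff_le:
  assumes f: "f \<in> OC" and r: "r > 0" and M: "\<And>w. cmod w = r \<Longrightarrow> cmod (f w) \<le> M"
  shows "cmod (laurent_coeff f n) \<le> M * r powi (- n)"
proof -
  have M0: "M \<ge> 0" using M[of "of_real r"] r by (smt (verit) norm_ge_zero norm_of_real)
  have "cmod (2 * pi * \<i> * laurent_coeff f n) \<le> (M * r powi (- n - 1)) * (2 * pi * r)"
  proof (rule has_contour_integral_bound_circlepath[OF laurent_coeff_has_contour_integral[OF f r]])
    show "0 \<le> M * r powi (- n - 1)" using M0 r by simp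
    fix x :: complex assume "cmod (x - 0) = r"
    then have x: "cmod x = r" by simp
    have "cmod (f x * x powi (- n - 1)) = cmod (f x) * r powi (- n - 1)"
      by (simp add: norm_mult norm_power_int x)
    also have "\<dots> \<le> M * r powi (- n - 1)" using M[OF x] r by (intro mult_right_mono) auto
    finally show "cmod (f x * x powi (- n - 1)) \<le> M * r powi (- n - 1)" .
  qed (use r in auto)
  also have "\<dots> = 2 * pi * (M * (r powi (- n - 1) * r))" by (simp add: algebra_simps)
  also have "r powi (- n - 1) * r = r powi (- n)"
    using r by (simp add: power_int_diff)
  finally have "2 * pi * cmod (laurent_coeff f n) \<le> 2 * pi * (M * r powi (- n))"
    by (simp add: norm_mult)
  then show ?thesis by simp
qed

lemma OC_divide_contour_integrable_circlepath:
  assumes f: "f \<in> OC" and rho: "\<rho> > 0" "cmod z \<noteq> \<rho>"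
  shows "(\<lambda>w. f w / (w - z)) contour_integrable_on circlepath 0 \<rho>"
proof (rule contour_integrable_continuous_circlepath)
  have s: "path_image (circlepath 0 \<rho>) = sphere 0 \<rho>" using rho by simp
  have "sphere (0::complex) \<rho> \<subseteq> - {0}" using rho by auto
  then have "continuous_on (sphere 0 \<rho>) f" using OC_continuous_on[OF f] by blast
  moreover have "\<forall>w\<in>sphere 0 \<rho>. w - z \<noteq> 0" using rho by auto
  ultimately show "continuous_on (path_image (circlepath 0 \<rho>)) (\<lambda>w. f w / (w - z))"
    unfolding s by (intro continuous_intros) auto
qed

lemma Cauchy_integral_formula_annulus:
  assumes f: "f \<in> OC" and r: "0 < r" "r < cmod z" "cmod z < R"
  shows "2 * pi * \<i> * f z = contour_integral (circlepath 0 R) (\<lambda>w. f w / (w - z))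
            - contour_integral (circlepath 0 r) (\<lambda>w. f w / (w - z))"
proof -
  \<comment> \<open>the difference quotient \<open>h\<close> is holomorphic on \<open>- {0}\<close>, so its integrals over both circles agree\<close>
  define h where "h = (\<lambda>w. if w = z then deriv f z else (f w - f z) / (w - z))"
  have "h holomorphic_on (- {0})" unfolding h_def
    by (rule pole_lemma_open[OF OC_holomorphic[OF f]]) (simp add: open_Compl)
  then have hol: "h holomorphic_on (UNIV - {0})" by (simp add: Compl_eq_Diff_UNIV)
  have rR: "r \<le> R" using r by simp
  note E = contour_integral_circlepath_eq[OF open_UNIV hol r(1) rR subset_UNIV]
  define IR where "IR = contour_integral (circlepath 0 R) (\<lambda>w. f w / (w - z))"
  define Ir where "Ir = contour_integral (circlepath 0 r) (\<lambda>w. f w / (w - z))"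
  have R0: "R > 0" using r by simp
  have hIR: "((\<lambda>w. f w / (w - z)) has_contour_integral IR) (circlepath 0 R)"
    unfolding IR_def by (rule has_contour_integral_integral[OF OC_divide_contour_integrable_circlepath[OF f R0]]) (use r in simp)
  have hIr: "((\<lambda>w. f w / (w - z)) has_contour_integral Ir) (circlepath 0 r)"
    unfolding Ir_def by (rule has_contour_integral_integral[OF OC_divide_contour_integrable_circlepath[OF f r(1)]]) (use r in simp)
  have c1: "((\<lambda>w. f z / (w - z)) has_contour_integral (2 * pi * \<i> * f z)) (circlepath 0 R)"
    using Cauchy_integral_circlepath_simple[of "\<lambda>w. f z" 0 R z] r by simp
  have c2: "((\<lambda>w. f z / (w - z)) has_contour_integral 0) (circlepath 0 r)"
  proof (rule Cauchy_theorem_convex_simple[of _ "ball 0 (cmod z)"])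
    show "(\<lambda>w. f z / (w - z)) holomorphic_on ball 0 (cmod z)"
      by (intro holomorphic_intros) auto
    show "path_image (circlepath 0 r) \<subseteq> ball 0 (cmod z)" using r by auto
  qed auto
  have "((\<lambda>w. f w / (w - z) - f z / (w - z)) has_contour_integral (IR - 2 * pi * \<i> * f z)) (circlepath 0 R)"
    by (rule has_contour_integral_diff[OF hIR c1])
  then have "(h has_contour_integral (IR - 2 * pi * \<i> * f z)) (circlepath 0 R)"
    by (rule has_contour_integral_eq) (use r in \<open>auto simp: h_def diff_divide_distrib\<close>)
  then have 1: "contour_integral (circlepath 0 R) h = IR - 2 * pi * \<i> * f z"
    by (rule contour_integral_unique)
  have "((\<lambda>w. f w / (w - z) - f z / (w - z)) has_contour_integral (Ir - 0)) (circlepath 0 r)"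
    by (rule has_contour_integral_diff[OF hIr c2])
  then have "(h has_contour_integral (Ir - 0)) (circlepath 0 r)"
    by (rule has_contour_integral_eq) (use r in \<open>auto simp: h_def diff_divide_distrib\<close>)
  then have 2: "contour_integral (circlepath 0 r) h = Ir"
    by (simp add: contour_integral_unique)
  have "IR - 2 * pi * \<i> * f z = Ir" using E(3) 1 2 by simp
  then show ?thesis unfolding IR_def[symmetric] Ir_def[symmetric] by (simp add: algebra_simps)
qed

lemma power_int_minus_Suc: "(w::complex) powi (- int n - 1) = 1 / w ^ Suc n"
proof -
  have e: "- int n - 1 = - int (Suc n)" by simp
  have "w powi (- int n - 1) = w powi (- int (Suc n))" by (subst e) (rule refl)
  also have "\<dots> = inverse (w powi int (Suc n))" by (rule power_int_minus)
  also have "w powi int (Suc n) = w ^ Suc n" by (rule power_int_of_nat)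
  finally show ?thesis by (simp add: divide_inverse)
qed

lemma geometric_remainder_outer:
  fixes w z :: complex assumes "w \<noteq> 0" "w \<noteq> z"
  shows "1 / (w - z) - (\<Sum>n\<le>K. z ^ n * (1 / w ^ Suc n)) = (z / w) ^ Suc K / (w - z)"
proof (induction K)
  case 0
  have "w - z \<noteq> 0" using assms by simp
  then show ?case using assms by (simp add: field_simps)
next
  case (Suc K)
  have "w - z \<noteq> 0" using assms by simp
  have "1 / (w - z) - (\<Sum>n\<le>Suc K. z ^ n * (1 / w ^ Suc n)) =
        (z / w) ^ Suc K / (w - z) - z ^ Suc K * (1 / w ^ Suc (Suc K))"
    using Suc by (simp add: algebra_simps)
  also have "\<dots> = (z / w) ^ Suc (Suc K) / (w - z)"
    using assms \<open>w - z \<noteq> 0\<close> by (simp add: field_simps power_divide)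
  finally show ?case .
qed

lemma geometric_remainder_inner:
  fixes w z :: complex assumes "z \<noteq> 0" "w \<noteq> z"
  shows "1 / (w - z) + (\<Sum>m\<le>K. (1 / z ^ Suc m) * w ^ m) = (w / z) ^ Suc K / (w - z)"
proof (induction K)
  case 0
  have "w - z \<noteq> 0" using assms by simp
  then show ?case using assms by (simp add: field_simps)
next
  case (Suc K)
  have "w - z \<noteq> 0" using assms by simp
  have "1 / (w - z) + (\<Sum>m\<le>Suc K. (1 / z ^ Suc m) * w ^ m) =
        (w / z) ^ Suc K / (w - z) + (1 / z ^ Suc (Suc K)) * w ^ Suc K"
    using Suc by (simp add: algebra_simps)
  also have "\<dots> = (w / z) ^ Suc (Suc K) / (w - z)"
    using assms \<open>w - z \<noteq> 0\<close> by (simp add: field_simps power_divide)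
  finally show ?case .
qed

lemma sum_int_interval_split:
  "(\<Sum>n\<in>{- int K - 1..int K}. F n) = (\<Sum>n\<le>K. F (int n)) + (\<Sum>m\<le>K. F (- int m - 1))"
proof (induction K)
  case 0
  have "{- int 0 - 1..int 0} = {-1, 0}" by auto
  then show ?case by (simp add: add.commute)
next
  case (Suc K)
  have e: "{- int (Suc K) - 1..int (Suc K)} = insert (int K + 1) (insert (- int K - 2) {- int K - 1..int K})"
    by auto
  have "(\<Sum>n\<in>{- int (Suc K) - 1..int (Suc K)}. F n) = F (int K + 1) + (F (- int K - 2) + (\<Sum>n\<in>{- int K - 1..int K}. F n))"
    unfolding e by (simp add: sum.insert)
  also have "\<dots> = (\<Sum>n\<le>Suc K. F (int n)) + (\<Sum>m\<le>Suc K. F (- int m - 1))"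
    using Suc by (simp add: algebra_simps)
  finally show ?case .
qed

lemma norm_geometric_remainder_le:
  assumes "cmod a \<le> M" "cmod q \<le> 1/2" "d \<le> cmod (w - z)" "d > 0"
  shows "cmod (a * q ^ Suc K / (w - z)) \<le> M * (1/2) ^ Suc K / d"
proof -
  have M0: "M \<ge> 0" using assms(1) norm_ge_zero order_trans by blast
  have "cmod (a * q ^ Suc K) \<le> M * (1/2) ^ Suc K"
    unfolding norm_mult norm_power
    by (intro mult_mono power_mono) (use assms M0 in auto)
  have "cmod (a * q ^ Suc K) / cmod (w - z) \<le> cmod (a * q ^ Suc K) / d"
    by (rule divide_left_mono) (use assms in \<open>auto intro!: mult_pos_pos\<close>)
  also have "\<dots> \<le> M * (1/2) ^ Suc K / d"
    by (rule divide_right_mono) (use \<open>cmod (a * q ^ Suc K) \<le> M * (1/2) ^ Suc K\<close> assms in auto)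
  finally have "cmod (a * q ^ Suc K) / cmod (w - z) \<le> M * (1/2) ^ Suc K / d" .
  then show ?thesis by (simp add: norm_divide)
qed

lemma norm_cauchy_kernel_outer_remainder_le:
  fixes a w z :: complex
  assumes "cmod w = R" "cmod z \<le> R / 2" "cmod a \<le> M" "R > 0"
  shows "cmod (a / (w - z) - (\<Sum>n\<le>K. z ^ n * (a * w powi (- int n - 1))))
    \<le> M * (1/2) ^ Suc K / (R / 2)"
proof -
  have "w \<noteq> 0" "w \<noteq> z"
    using assms by auto
  have "a / (w - z) - (\<Sum>n\<le>K. z ^ n * (a * w powi (- int n - 1)))
      = a * (1 / (w - z) - (\<Sum>n\<le>K. z ^ n * (1 / w ^ Suc n)))"
    by (simp add: power_int_minus_Suc sum_distrib_left algebra_simps)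
  also have "\<dots> = a * (z / w) ^ Suc K / (w - z)"
    using geometric_remainder_outer[OF \<open>w \<noteq> 0\<close> \<open>w \<noteq> z\<close>, of K] by simp
  finally have eq: "a / (w - z) - (\<Sum>n\<le>K. z ^ n * (a * w powi (- int n - 1)))
      = a * (z / w) ^ Suc K / (w - z)" .
  have "cmod (z / w) \<le> 1/2"
    using assms by (simp add: norm_divide field_simps)
  moreover have "R / 2 \<le> cmod (w - z)"
    using assms norm_triangle_ineq2[of w z] by simp
  ultimately show ?thesis
    unfolding eq using assms by (intro norm_geometric_remainder_le) simp_all
qed

lemma norm_cauchy_kernel_inner_remainder_le:
  fixes a w z :: complex
  assumes "cmod w = r" "2 * r \<le> cmod z" "cmod a \<le> M" "r > 0"
  shows "cmod (a / (w - z) + (\<Sum>m\<le>K. (1 / z ^ Suc m) * (a * w powi (- (- int m - 1) - 1))))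
    \<le> M * (1/2) ^ Suc K / r"
proof -
  have "z \<noteq> 0" "w \<noteq> z"
    using assms by auto
  have "a / (w - z) + (\<Sum>m\<le>K. (1 / z ^ Suc m) * (a * w powi (- (- int m - 1) - 1)))
      = a * (1 / (w - z) + (\<Sum>m\<le>K. (1 / z ^ Suc m) * w ^ m))"
    by (simp add: sum_distrib_left algebra_simps)
  also have "\<dots> = a * (w / z) ^ Suc K / (w - z)"
    using geometric_remainder_inner[OF \<open>z \<noteq> 0\<close> \<open>w \<noteq> z\<close>, of K] by simp
  finally have eq: "a / (w - z) + (\<Sum>m\<le>K. (1 / z ^ Suc m) * (a * w powi (- (- int m - 1) - 1)))
      = a * (w / z) ^ Suc K / (w - z)" .
  have "cmod (w / z) \<le> 1/2"
    using assms \<open>z \<noteq> 0\<close> by (simp add: norm_divide field_simps)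
  moreover have "r \<le> cmod (w - z)"
    using assms norm_triangle_ineq2[of z w] by (simp add: norm_minus_commute)
  ultimately show ?thesis
    unfolding eq using assms by (intro norm_geometric_remainder_le) simp_all
qed

lemma laurent_remainder_bound:
  assumes f: "f \<in> OC" and r: "r > 0"
    and Mr: "\<And>w. cmod w = r \<Longrightarrow> cmod (f w) \<le> M"
    and MR: "\<And>w. cmod w = R \<Longrightarrow> cmod (f w) \<le> M"
    and z: "2 * r \<le> cmod z" "cmod z \<le> R / 2"
  shows "cmod (f z - (\<Sum>n\<in>{- int K - 1..int K}. laurent_coeff f n * z powi n)) \<le> 3 * M * (1/2) ^ Suc K"
proof -
  have zr: "r < cmod z" and zR: "cmod z < R" and R0: "R > 0" and z0: "z \<noteq> 0" using r z by auto
  define c where "c = 2 * pi * \<i>"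
  have c0: "c \<noteq> 0" by (simp add: c_def)
  define IR where "IR = contour_integral (circlepath 0 R) (\<lambda>w. f w / (w - z))"
  define Ir where "Ir = contour_integral (circlepath 0 r) (\<lambda>w. f w / (w - z))"
  have hIR: "((\<lambda>w. f w / (w - z)) has_contour_integral IR) (circlepath 0 R)"
    unfolding IR_def by (rule has_contour_integral_integral[OF OC_divide_contour_integrable_circlepath[OF f R0]]) (use zR in simp)
  have hIr: "((\<lambda>w. f w / (w - z)) has_contour_integral Ir) (circlepath 0 r)"
    unfolding Ir_def by (rule has_contour_integral_integral[OF OC_divide_contour_integrable_circlepath[OF f r]]) (use zr in simp)
  \<comment> \<open>expand the Cauchy kernel in powers of \<open>z / w\<close> on the outer and of \<open>w / z\<close> on the inner circle\<close>
  have cau: "c * f z = IR - Ir" unfolding c_def IR_def Ir_def by (rule Cauchy_integral_formula_annulus[OF f r zr zR])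
  define SR where "SR = (\<Sum>n\<le>K. z ^ n * (c * laurent_coeff f (int n)))"
  define Sr where "Sr = (\<Sum>m\<le>K. (1 / z ^ Suc m) * (c * laurent_coeff f (- int m - 1)))"
  have hSR: "((\<lambda>w. \<Sum>n\<le>K. z ^ n * (f w * w powi (- int n - 1))) has_contour_integral SR) (circlepath 0 R)"
    unfolding SR_def c_def
    by (intro has_contour_integral_sum has_contour_integral_lmul laurent_coeff_has_contour_integral[OF f R0]) auto
  have hSr: "((\<lambda>w. \<Sum>m\<le>K. (1 / z ^ Suc m) * (f w * w powi (- (- int m - 1) - 1))) has_contour_integral Sr) (circlepath 0 r)"
    unfolding Sr_def c_def
    by (intro has_contour_integral_sum has_contour_integral_lmul laurent_coeff_has_contour_integral[OF f r]) auto
  have dR: "((\<lambda>w. f w / (w - z) - (\<Sum>n\<le>K. z ^ n * (f w * w powi (- int n - 1)))) has_contour_integral (IR - SR)) (circlepath 0 R)"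
    by (rule has_contour_integral_diff[OF hIR hSR])
  have dr: "((\<lambda>w. f w / (w - z) + (\<Sum>m\<le>K. (1 / z ^ Suc m) * (f w * w powi (- (- int m - 1) - 1)))) has_contour_integral (Ir + Sr)) (circlepath 0 r)"
    by (rule has_contour_integral_add[OF hIr hSr])
  have bR: "cmod (IR - SR) \<le> (M * (1/2) ^ Suc K / (R/2)) * (2 * pi * R)"
  proof (rule has_contour_integral_bound_circlepath[OF dR])
    have "M \<ge> 0" using MR[of "of_real R"] R0 by (smt (verit) norm_ge_zero norm_of_real)
    then show "0 \<le> M * (1/2) ^ Suc K / (R/2)" using R0 by simp
    fix w :: complex
    assume "cmod (w - 0) = R"
    then show "cmod (f w / (w - z) - (\<Sum>n\<le>K. z ^ n * (f w * w powi (- int n - 1))))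
        \<le> M * (1/2) ^ Suc K / (R/2)"
      using z R0 MR by (intro norm_cauchy_kernel_outer_remainder_le) auto
  qed (use R0 in auto)
  have br: "cmod (Ir + Sr) \<le> (M * (1/2) ^ Suc K / r) * (2 * pi * r)"
  proof (rule has_contour_integral_bound_circlepath[OF dr])
    have "M \<ge> 0" using Mr[of "of_real r"] r by (smt (verit) norm_ge_zero norm_of_real)
    then show "0 \<le> M * (1/2) ^ Suc K / r" using r by simp
    fix w :: complex
    assume "cmod (w - 0) = r"
    then show "cmod (f w / (w - z) + (\<Sum>m\<le>K. (1 / z ^ Suc m) * (f w * w powi (- (- int m - 1) - 1))))
        \<le> M * (1/2) ^ Suc K / r"
      using z r Mr by (intro norm_cauchy_kernel_inner_remainder_le) auto
  qed (use r in auto)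
  have S: "c * (\<Sum>n\<in>{- int K - 1..int K}. laurent_coeff f n * z powi n) = SR + Sr"
    unfolding sum_int_interval_split SR_def Sr_def
    by (simp add: sum_distrib_left power_int_minus_Suc algebra_simps)
  have "c * (f z - (\<Sum>n\<in>{- int K - 1..int K}. laurent_coeff f n * z powi n)) = (IR - SR) - (Ir + Sr)"
    using cau S by (simp add: algebra_simps)
  then have "cmod c * cmod (f z - (\<Sum>n\<in>{- int K - 1..int K}. laurent_coeff f n * z powi n)) \<le> cmod (IR - SR) + cmod (Ir + Sr)"
    by (metis norm_mult norm_triangle_ineq4)
  also have "\<dots> \<le> (M * (1/2) ^ Suc K / (R/2)) * (2 * pi * R) + (M * (1/2) ^ Suc K / r) * (2 * pi * r)"
    using bR br by simp
  also have "\<dots> = (2 * pi) * (3 * M * (1/2) ^ Suc K)" using R0 r by (simp add: field_simps)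
  finally show ?thesis unfolding c_def by (simp add: norm_mult)
qed

lemma laurent_coeff_contour_integrable:
  "f \<in> OC \<Longrightarrow> (\<lambda>w. f w * w powi (- n - 1)) contour_integrable_on circlepath 0 1"
  using laurent_coeff_has_contour_integral[of f 1 n] by (auto intro: has_contour_integral_integrable)

lemma laurent_coeff_add:
  assumes "f \<in> OC" "g \<in> OC"
  shows "laurent_coeff (\<lambda>x. f x + g x) n = laurent_coeff f n + laurent_coeff g n"
  using contour_integral_add[OF laurent_coeff_contour_integrable[OF assms(1)]
      laurent_coeff_contour_integrable[OF assms(2)]]
  unfolding laurent_coeff_def by (simp add: distrib_right add_divide_distrib)

lemma laurent_coeff_cmult:
  assumes "f \<in> OC"
  shows "laurent_coeff (\<lambda>x. c * f x) n = c * laurent_coeff f n"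
  using contour_integral_lmul[OF laurent_coeff_contour_integrable[OF assms], of c]
  unfolding laurent_coeff_def by (simp add: mult.assoc)

lemma laurent_coeff_cong:
  assumes "\<And>w. cmod w = 1 \<Longrightarrow> f w = g w"
  shows "laurent_coeff f n = laurent_coeff g n"
  unfolding laurent_coeff_def
  by (subst contour_integral_eq[where g = "\<lambda>w. g w * w powi (- n - 1)"]) (auto simp: assms)

lemma laurent_coeff_powi: "laurent_coeff (\<lambda>x. x powi m) n = (if m = n then 1 else 0)"
proof -
  have eq: "w powi m * w powi (- n - 1) = w powi (m - n - 1)" if "w \<noteq> 0" for w :: complex
    using power_int_add[of w m "- n - 1"] that by (simp add: algebra_simps)
  have "contour_integral (circlepath 0 1) (\<lambda>w. w powi m * w powi (- n - 1))
      = contour_integral (circlepath 0 1) (\<lambda>w. w powi (m - n - 1))"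
    by (rule contour_integral_eq) (auto intro!: eq)
  also have "\<dots> = (if m = n then 2 * pi * \<i> else 0)"
  proof (cases "m = n")
    case True
    have "contour_integral (circlepath 0 1) (\<lambda>w. w powi (m - n - 1)) = contour_integral (circlepath 0 1) (\<lambda>w. 1 / (w - 0))"
      by (rule contour_integral_eq) (simp add: True power_int_minus divide_inverse)
    also have "\<dots> = 2 * pi * \<i>" using contour_integral_circlepath[of 1 0] by simp
    finally show ?thesis using True by simp
  next
    case False
    define k where "k = m - n"
    have k0: "k \<noteq> 0" using False by (simp add: k_def)
    have "((\<lambda>w. w powi (k - 1)) has_contour_integral 0) (circlepath 0 1)"
    proof (rule Cauchy_theorem_primitive[where S = "- {0}" and f = "\<lambda>w. w powi k / of_int k"])
      fix x :: complex assume "x \<in> - {0}"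
      then have x: "x \<noteq> 0" by simp
      have "((\<lambda>w. w powi k) has_field_derivative (of_int k * x powi (k - 1) * 1)) (at x within - {0})"
        by (rule DERIV_power_int) (auto simp: x intro: derivative_eq_intros)
      then have "((\<lambda>w. w powi k / of_int k) has_field_derivative (of_int k * x powi (k - 1) * 1) / of_int k) (at x within - {0})"
        by (rule DERIV_cdivide)
      then show "((\<lambda>w. w powi k / of_int k) has_field_derivative x powi (k - 1)) (at x within - {0})"
        using k0 by simp
    qed auto
    then show ?thesis using False by (simp add: k_def contour_integral_unique)
  qed
  finally show ?thesis unfolding laurent_coeff_def by simp
qed

lemma compact_subset_annulus:
  assumes "compact K" "K \<subseteq> - {0}"
  obtains r R where "r > 0" "R > 0" "\<And>z. z \<in> K \<Longrightarrow> 2 * r \<le> cmod z \<and> cmod z \<le> R / 2"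
proof (cases "K = {}")
  case True
  then show ?thesis using that[of 1 1] by simp
next
  case False
  obtain x where x: "x \<in> K" "\<And>y. y \<in> K \<Longrightarrow> cmod x \<le> cmod y"
    using continuous_attains_inf[OF assms(1) False, of norm] by (auto intro: continuous_intros)
  obtain b where b: "\<And>y. y \<in> K \<Longrightarrow> cmod y \<le> b"
    using compact_imp_bounded[OF assms(1)] bounded_iff by metis
  have "cmod x > 0"
    using x(1) assms(2) by auto
  moreover have "cmod x \<le> b"
    using b x(1) by blast
  ultimately have "b > 0"
    by linarith
  show ?thesis
    using x b \<open>cmod x > 0\<close> \<open>b > 0\<close> by (intro that[of "cmod x / 2" "2 * b"]) auto
qed

lemma linear_on_OC_laurent_approx:
  assumes lin: "linear_on_OC \<alpha>"
    and bound: "\<And>g t. g \<in> OC \<Longrightarrow> t \<ge> 0 \<Longrightarrow> (\<forall>z\<in>K. cmod (g z) \<le> t) \<Longrightarrow> cmod (\<alpha> g) \<le> C * t"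
    and annulus: "\<And>z. z \<in> K \<Longrightarrow> 2 * r \<le> cmod z \<and> cmod z \<le> R / 2" and "r > 0"
    and f: "f \<in> OC" and Mr: "\<And>w. cmod w = r \<Longrightarrow> cmod (f w) \<le> M"
    and MR: "\<And>w. cmod w = R \<Longrightarrow> cmod (f w) \<le> M"
  shows "cmod (\<alpha> f - (\<Sum>n\<in>{- int k - 1..int k}. laurent_coeff f n * coef \<alpha> n))
    \<le> C * (3 * M * (1/2) ^ Suc k)"
proof -
  define S where "S = (\<lambda>x. \<Sum>n\<in>{- int k - 1..int k}. laurent_coeff f n * x powi n)"
  have "S \<in> OC"
    unfolding S_def by (intro OC_sum OC_cmult OC_powi)
  have "\<alpha> S = (\<Sum>n\<in>{- int k - 1..int k}. laurent_coeff f n * coef \<alpha> n)"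
    unfolding S_def coef_def
    by (simp add: linear_on_OC_sum[OF lin] OC_cmult linear_on_OC_cmult[OF lin])
  moreover have "M \<ge> 0"
    using Mr[of "of_real r"] \<open>r > 0\<close> by (smt (verit) norm_ge_zero norm_of_real)
  then have "cmod (\<alpha> (\<lambda>x. f x - S x)) \<le> C * (3 * M * (1/2) ^ Suc k)"
    using laurent_remainder_bound[OF f \<open>r > 0\<close> Mr MR] annulus
    by (intro bound OC_diff f \<open>S \<in> OC\<close>) (simp_all add: S_def)
  ultimately show ?thesis
    using linear_on_OC_diff[OF lin f \<open>S \<in> OC\<close>] by simp
qed

lemma nonpos_if_le_geometric:
  fixes x D :: real
  assumes "\<And>k. k \<ge> k0 \<Longrightarrow> x \<le> D * (1/2) ^ Suc k"
  shows "x \<le> 0"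
proof (rule LIMSEQ_le_const)
  have "(\<lambda>k. (1/2::real) ^ Suc k) \<longlonglongrightarrow> 0"
    by (rule LIMSEQ_Suc[OF LIMSEQ_power_zero]) simp
  then show "(\<lambda>k. D * (1/2::real) ^ Suc k) \<longlonglongrightarrow> 0"
    by (rule tendsto_mult_right_zero)
qed (use assms in blast)

definition coeff_functional :: "int \<Rightarrow> (complex \<Rightarrow> complex) \<Rightarrow> complex" where
  "coeff_functional n f = (if f \<in> OC then laurent_coeff f n else 0)"

lemma linear_on_OC_coeff_functional: "linear_on_OC (coeff_functional n)"
  unfolding linear_on_OC_def coeff_functional_def
  by (simp add: OC_add OC_cmult laurent_coeff_add laurent_coeff_cmult)

lemma norm_coeff_functional_le:
  "g \<in> OC \<Longrightarrow> t \<ge> 0 \<Longrightarrow> (\<forall>z\<in>sphere 0 1. cmod (g z) \<le> t) \<Longrightarrow> cmod (coeff_functional n g) \<le> 1 * t"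
  unfolding coeff_functional_def using norm_laurent_coeff_le[of g 1 t n] by simp

lemma coeff_functional_in_OCdual: "coeff_functional n \<in> OCdual"
proof -
  have "continuous_map OC_top euclidean (coeff_functional n)"
    by (rule continuous_map_OC_top_if_bounded[OF linear_on_OC_coeff_functional _ _ _ norm_coeff_functional_le])
      auto
  then show ?thesis
    using linear_on_OC_coeff_functional unfolding OCdual_def linear_on_OC_def
    by (auto simp: coeff_functional_def)
qed

lemma coef_coeff_functional: "coef (coeff_functional n) m = (if m = n then 1 else 0)"
  by (simp add: coef_def coeff_functional_def laurent_coeff_powi)

lemma coeff_functional_compose_scale:
  assumes u: "u \<in> OC" and "s \<noteq> 0"
  shows "coeff_functional n (\<lambda>t. u (s * t)) = laurent_coeff u n * s powi n"
proof -
  \<comment> \<open>\<open>\<beta>\<close> is again a bounded functional, whose coefficients vanish except the \<open>n\<close>-th\<close>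
  define \<beta> where "\<beta> = (\<lambda>v. coeff_functional n (\<lambda>t. v (s * t)))"
  have lin: "linear_on_OC \<beta>"
    using linear_on_OC_coeff_functional[of n]
    unfolding linear_on_OC_def \<beta>_def by (simp add: OC_compose_scale)
  have bound: "cmod (\<beta> g) \<le> 1 * t"
    if "g \<in> OC" "t \<ge> 0" "\<forall>z\<in>sphere 0 (cmod s). cmod (g z) \<le> t" for g t
    unfolding \<beta>_def using that
    by (intro norm_coeff_functional_le OC_compose_scale) (auto simp: norm_mult)
  obtain r R where "r > 0" "R > 0"
    and annulus: "\<And>z. z \<in> sphere 0 (cmod s) \<Longrightarrow> 2 * r \<le> cmod z \<and> cmod z \<le> R / 2"
    using compact_subset_annulus[of "sphere 0 (cmod s)"] \<open>s \<noteq> 0\<close> by auto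
  obtain b where b: "\<forall>z\<in>sphere 0 r \<union> sphere 0 R. cmod (u z) \<le> b"
    using OC_bounded_on_compact[OF u, of "sphere 0 r \<union> sphere 0 R"] \<open>r > 0\<close> \<open>R > 0\<close>
    by (auto simp: compact_Un)
  have Mr: "\<And>w. cmod w = r \<Longrightarrow> cmod (u w) \<le> b" and MR: "\<And>w. cmod w = R \<Longrightarrow> cmod (u w) \<le> b"
    using b by auto
  have coef_\<beta>: "coef \<beta> m = s powi m * (if m = n then 1 else 0)" for m
    using linear_on_OC_cmult[OF linear_on_OC_coeff_functional OC_powi, of n "s powi m" m]
      coef_coeff_functional[of n m]
    by (simp add: coef_def \<beta>_def power_int_mult_distrib)
  have "cmod (\<beta> u - laurent_coeff u n * s powi n) \<le> 3 * b * (1/2) ^ Suc k"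
    if "k \<ge> nat \<bar>n\<bar>" for k
  proof -
    have "n \<in> {- int k - 1..int k}"
      using that by auto
    then have "(\<Sum>m\<in>{- int k - 1..int k}. laurent_coeff u m * coef \<beta> m) = laurent_coeff u n * s powi n"
      by (simp add: coef_\<beta> if_distrib cong: if_cong)
    moreover have "cmod (\<beta> u - (\<Sum>m\<in>{- int k - 1..int k}. laurent_coeff u m * coef \<beta> m))
        \<le> 1 * (3 * b * (1/2) ^ Suc k)"
      by (rule linear_on_OC_laurent_approx[OF lin bound annulus \<open>r > 0\<close> u Mr MR])
    ultimately show ?thesis
      by (simp only: mult.left_neutral)
  qed
  then have "cmod (\<beta> u - laurent_coeff u n * s powi n) \<le> 0"
    by (rule nonpos_if_le_geometric)
  then show ?thesis
    by (simp add: \<beta>_def)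
qed

lemma conv_coeff_functional_self: "conv (coeff_functional n) (coeff_functional n) = coeff_functional n"
proof
  fix u
  show "conv (coeff_functional n) (coeff_functional n) u = coeff_functional n u"
  proof (cases "u \<in> OC")
    case True
    define G where "G = (\<lambda>s. coeff_functional n (\<lambda>t. u (s * t)))"
    have G: "G s = laurent_coeff u n * s powi n" if "s \<noteq> 0" for s
      unfolding G_def by (rule coeff_functional_compose_scale[OF True that])
    have "(\<lambda>s. laurent_coeff u n * s powi n) holomorphic_on - {0}"
      by (intro holomorphic_intros) auto
    then have "G holomorphic_on - {0}"
      by (rule holomorphic_transform) (simp add: G)
    then have "G \<in> OC"
      by (simp add: OC_def)
    then have "coeff_functional n G = laurent_coeff (\<lambda>s. laurent_coeff u n * s powi n) n"
      unfolding coeff_functional_def by (auto intro!: laurent_coeff_cong G)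
    also have "\<dots> = laurent_coeff u n"
      by (simp add: laurent_coeff_cmult laurent_coeff_powi)
    finally show ?thesis
      using True by (simp add: conv_def coeff_functional_def G_def)
  qed (simp add: conv_def coeff_functional_def)
qed

lemma coef_dadd: "coef (dadd \<alpha> \<beta>) n = coef \<alpha> n + coef \<beta> n"
  by (simp add: coef_def dadd_def)

lemma coef_dscale: "coef (dscale c \<alpha>) n = c * coef \<alpha> n"
  by (simp add: coef_def dscale_def)

lemma coef_conv:
  assumes "\<alpha> \<in> OCdual" "\<beta> \<in> OCdual"
  shows "coef (conv \<alpha> \<beta>) n = coef \<alpha> n * coef \<beta> n"
proof -
  have lin: "linear_on_OC \<alpha>" "linear_on_OC \<beta>"
    using assms by (simp_all add: OCdual_linear_on_OC)
  have "\<beta> (\<lambda>t. (s * t) powi n) = s powi n * coef \<beta> n" for s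
    using linear_on_OC_cmult[OF lin(2) OC_powi, of "s powi n" n]
    by (simp add: coef_def power_int_mult_distrib)
  then have "coef (conv \<alpha> \<beta>) n = \<alpha> (\<lambda>s. coef \<beta> n * s powi n)"
    by (simp add: conv_def coef_def mult.commute)
  also have "\<dots> = coef \<beta> n * coef \<alpha> n"
    unfolding coef_def by (rule linear_on_OC_cmult[OF lin(1) OC_powi])
  finally show ?thesis
    by simp
qed

lemma sum_mult_le_sum_mult_sum:
  fixes a b :: "'a \<Rightarrow> 'b::linordered_semidom"
  assumes "finite I" "\<And>i. i \<in> I \<Longrightarrow> a i \<ge> 0" "\<And>i. i \<in> I \<Longrightarrow> b i \<ge> 0"
  shows "(\<Sum>i\<in>I. a i * b i) \<le> (\<Sum>i\<in>I. a i) * (\<Sum>i\<in>I. b i)"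
proof -
  have "(\<Sum>i\<in>I. a i * b i) \<le> (\<Sum>i\<in>I. a i * (\<Sum>j\<in>I. b j))"
    using assms by (intro sum_mono mult_left_mono) (auto intro!: member_le_sum)
  also have "\<dots> = (\<Sum>i\<in>I. a i) * (\<Sum>i\<in>I. b i)"
    by (simp add: sum_distrib_right)
  finally show ?thesis .
qed

lemma dual_seminorm_normN: "dual_seminorm (normN N)"
  unfolding dual_seminorm_def normN_def coef_dadd coef_dscale
  by (simp add: sum_nonneg norm_mult sum_distrib_left sum_mono norm_triangle_ineq
      flip: sum.distrib)

lemma submultiplicative_normN: "submultiplicative (normN N)"
  unfolding submultiplicative_def normN_def
  by (simp add: coef_conv norm_mult sum_mult_le_sum_mult_sum)

lemma cont_seminorm_normN: "cont_seminorm (normN N)"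
  unfolding cont_seminorm_def continuous_map_def
proof (intro conjI allI impI)
  show "normN N \<in> topspace OCdual_top \<rightarrow> topspace euclideanreal" by simp
  fix U :: "real set" assume "openin euclideanreal U"
  then have oU: "open U" by simp
  show "openin OCdual_top {x \<in> topspace OCdual_top. normN N x \<in> U}"
    unfolding openin_OCdual_top topspace_OCdual_top
  proof (intro conjI ballI)
    show "{x \<in> OCdual. normN N x \<in> U} \<subseteq> OCdual" by blast
    fix \<alpha> assume a: "\<alpha> \<in> {x \<in> OCdual. normN N x \<in> U}"
    then obtain \<epsilon> where \<epsilon>: "\<epsilon> > 0" "ball (normN N \<alpha>) \<epsilon> \<subseteq> U" using oU open_contains_ball by blast
    define B where "B = (\<lambda>n (x::complex). x powi n) ` {- int N..int N}"
    have BOC: "B \<subseteq> topspace OC_top" by (auto simp: B_def topspace_OC_top)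
    have cB: "compactin OC_top B" by (rule finite_imp_compactin[OF BOC]) (simp add: B_def)
    define e where "e = \<epsilon> / (2 * real N + 2)"
    have e: "e > 0" using \<epsilon> by (simp add: e_def)
    have "{\<beta> \<in> OCdual. \<forall>f\<in>B. cmod (\<beta> f - \<alpha> f) \<le> e} \<subseteq> {x \<in> OCdual. normN N x \<in> U}"
    proof
      fix \<beta> assume b: "\<beta> \<in> {\<beta> \<in> OCdual. \<forall>f\<in>B. cmod (\<beta> f - \<alpha> f) \<le> e}"
      have cb: "cmod (coef \<beta> n - coef \<alpha> n) \<le> e" if "n \<in> {- int N..int N}" for n
        using b that unfolding coef_def B_def by blast
      have "\<bar>normN N \<beta> - normN N \<alpha>\<bar> = \<bar>\<Sum>n\<in>{- int N..int N}. cmod (coef \<beta> n) - cmod (coef \<alpha> n)\<bar>"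
        unfolding normN_def by (simp add: sum_subtractf)
      also have "\<dots> \<le> (\<Sum>n\<in>{- int N..int N}. \<bar>cmod (coef \<beta> n) - cmod (coef \<alpha> n)\<bar>)"
        by (rule sum_abs)
      also have "\<dots> \<le> (\<Sum>n\<in>{- int N..int N}. e)"
        by (rule sum_mono) (use cb norm_triangle_ineq3 order_trans in blast)
      also have "\<dots> = (2 * real N + 1) * e" by simp
      also have "\<dots> < \<epsilon>" using \<epsilon> e by (simp add: e_def field_simps)
      finally have "normN N \<beta> \<in> ball (normN N \<alpha>) \<epsilon>" by (simp add: dist_real_def abs_minus_commute)
      then show "\<beta> \<in> {x \<in> OCdual. normN N x \<in> U}" using b \<epsilon>(2) by blast
    qed
    then show "\<exists>B e. compactin OC_top B \<and> e > 0 \<and>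
        {\<beta> \<in> OCdual. \<forall>f\<in>B. cmod (\<beta> f - \<alpha> f) \<le> e} \<subseteq> {x \<in> OCdual. normN N x \<in> U}"
      using cB e by blast
  qed
qed

lemma OCdual_zero: "(\<lambda>f. 0) \<in> OCdual"
  by (simp add: OCdual_def)

lemma OCdual_dadd:
  assumes "\<alpha> \<in> OCdual" "\<beta> \<in> OCdual"
  shows "dadd \<alpha> \<beta> \<in> OCdual"
proof -
  have lin: "linear_on_OC \<alpha>" "linear_on_OC \<beta>"
    using assms by (simp_all add: OCdual_linear_on_OC)
  have "continuous_map OC_top euclidean (\<lambda>f. \<alpha> f + \<beta> f)"
    using assms by (intro continuous_map_add) (simp_all add: OCdual_def)
  then show ?thesis
    using assms unfolding OCdual_def dadd_def
    by (simp add: linear_on_OC_add[OF lin(1)] linear_on_OC_add[OF lin(2)]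
        linear_on_OC_cmult[OF lin(1)] linear_on_OC_cmult[OF lin(2)] algebra_simps)
qed

lemma OCdual_dscale:
  assumes "\<alpha> \<in> OCdual"
  shows "dscale c \<alpha> \<in> OCdual"
proof -
  have lin: "linear_on_OC \<alpha>"
    using assms by (simp add: OCdual_linear_on_OC)
  have "continuous_map OC_top euclidean (\<lambda>f. c * \<alpha> f)"
    using assms by (simp add: OCdual_def continuous_map_atin tendsto_mult_left)
  then show ?thesis
    using assms unfolding OCdual_def dscale_def
    by (simp add: linear_on_OC_add[OF lin] linear_on_OC_cmult[OF lin] algebra_simps)
qed

lemma OCdual_diff: "\<alpha> \<in> OCdual \<Longrightarrow> \<beta> \<in> OCdual \<Longrightarrow> (\<lambda>f. \<alpha> f - \<beta> f) \<in> OCdual"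
  using OCdual_dadd[OF _ OCdual_dscale, of \<alpha> \<beta> "-1"] by (simp add: dadd_def dscale_def)

lemma OCdual_sum:
  assumes "finite I" "\<And>i. i \<in> I \<Longrightarrow> \<phi> i \<in> OCdual"
  shows "(\<lambda>f. \<Sum>i\<in>I. c i * \<phi> i f) \<in> OCdual"
  using assms
proof (induction I rule: finite_induct)
  case (insert i I)
  then have "dadd (dscale (c i) (\<phi> i)) (\<lambda>f. \<Sum>j\<in>I. c j * \<phi> j f) \<in> OCdual"
    by (intro OCdual_dadd OCdual_dscale) auto
  with insert show ?case
    by (simp add: dadd_def dscale_def)
qed (simp add: OCdual_zero)

lemma dual_seminorm_zero:
  assumes "dual_seminorm p"
  shows "p (\<lambda>f. 0) = 0"
proof -
  have "p (dscale 0 (\<lambda>f. 0)) = cmod 0 * p (\<lambda>f. 0)"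
    using assms OCdual_zero unfolding dual_seminorm_def by blast
  then show ?thesis
    by (simp add: dscale_def)
qed

lemma dual_seminorm_sum_le:
  assumes p: "dual_seminorm p" and "finite I" "\<And>i. i \<in> I \<Longrightarrow> \<phi> i \<in> OCdual"
  shows "p (\<lambda>f. \<Sum>i\<in>I. c i * \<phi> i f) \<le> (\<Sum>i\<in>I. cmod (c i) * p (\<phi> i))"
  using assms(2,3)
proof (induction I rule: finite_induct)
  case empty
  then show ?case using dual_seminorm_zero[OF p] by simp
next
  case (insert i I)
  have \<phi>: "\<phi> i \<in> OCdual" "(\<lambda>f. \<Sum>j\<in>I. c j * \<phi> j f) \<in> OCdual"
    using insert.prems insert.hyps(1) by (auto intro!: OCdual_sum)
  have "p (dadd (dscale (c i) (\<phi> i)) (\<lambda>f. \<Sum>j\<in>I. c j * \<phi> j f))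
      \<le> p (dscale (c i) (\<phi> i)) + p (\<lambda>f. \<Sum>j\<in>I. c j * \<phi> j f)"
    using p OCdual_dscale[OF \<phi>(1)] \<phi>(2) unfolding dual_seminorm_def by blast
  also have "p (dscale (c i) (\<phi> i)) = cmod (c i) * p (\<phi> i)"
    using p \<phi>(1) unfolding dual_seminorm_def by blast
  also have "p (\<lambda>f. \<Sum>j\<in>I. c j * \<phi> j f) \<le> (\<Sum>j\<in>I. cmod (c j) * p (\<phi> j))"
    using insert by simp
  finally show ?case
    using insert by (simp add: dadd_def dscale_def)
qed

lemma dual_seminorm_le_add_diff:
  assumes "dual_seminorm p" "\<alpha> \<in> OCdual" "\<beta> \<in> OCdual"
  shows "p \<alpha> \<le> p \<beta> + p (\<lambda>f. \<alpha> f - \<beta> f)"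
proof -
  have "p (dadd \<beta> (\<lambda>f. \<alpha> f - \<beta> f)) \<le> p \<beta> + p (\<lambda>f. \<alpha> f - \<beta> f)"
    using assms(1,3) OCdual_diff[OF assms(2,3)] unfolding dual_seminorm_def by blast
  then show ?thesis
    by (simp add: dadd_def)
qed

lemma norm_laurent_coeff_le_geometric:
  assumes "f \<in> OC"
    and "\<And>w. cmod w = 2 \<Longrightarrow> cmod (f w) \<le> M" and "\<And>w. cmod w = 1/2 \<Longrightarrow> cmod (f w) \<le> M"
  shows "cmod (laurent_coeff f n) \<le> M * (1/2) ^ nat \<bar>n\<bar>"
proof (cases "n \<ge> 0")
  case True
  have "cmod (laurent_coeff f n) \<le> M * 2 powi (- n)"
    by (rule norm_laurent_coeff_le[OF assms(1)]) (use assms(2) in auto)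
  also have "(2::real) powi (- n) = (1/2) ^ nat \<bar>n\<bar>"
    using True unfolding power_int_def by (auto simp: power_one_over inverse_eq_divide)
  finally show ?thesis .
next
  case False
  have "cmod (laurent_coeff f n) \<le> M * (1/2) powi (- n)"
    by (rule norm_laurent_coeff_le[OF assms(1)]) (use assms(3) in auto)
  also have "(1/2::real) powi (- n) = (1/2) ^ nat \<bar>n\<bar>"
    using False unfolding power_int_def by auto
  finally show ?thesis .
qed

lemma cont_seminorm_bounded_on_compactin:
  assumes "dual_seminorm p" "cont_seminorm p"
  obtains B e where "compactin OC_top B" "e > 0"
    "\<And>\<beta> t. \<beta> \<in> OCdual \<Longrightarrow> t > 0 \<Longrightarrow> (\<forall>f\<in>B. cmod (\<beta> f) \<le> t) \<Longrightarrow> p \<beta> \<le> t / e"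
proof -
  have "openin OCdual_top {\<alpha> \<in> topspace OCdual_top. p \<alpha> \<in> {..<1}}"
    using assms(2) unfolding cont_seminorm_def
    by (intro openin_continuous_map_preimage[of _ euclideanreal]) simp_all
  then have "openin OCdual_top {\<alpha> \<in> OCdual. p \<alpha> \<in> {..<1}}"
    by (simp add: topspace_OCdual_top)
  moreover have "(\<lambda>f. 0) \<in> {\<alpha> \<in> OCdual. p \<alpha> \<in> {..<1}}"
    using dual_seminorm_zero[OF assms(1)] OCdual_zero by simp
  ultimately have "\<exists>B e. compactin OC_top B \<and> e > 0 \<and>
      {\<beta>\<in>OCdual. \<forall>f\<in>B. cmod (\<beta> f - 0) \<le> e} \<subseteq> {\<alpha> \<in> OCdual. p \<alpha> \<in> {..<1}}"
    by (rule openin_OCdual_top[THEN iffD1, THEN conjunct2, rule_format])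
  then obtain B e where B: "compactin OC_top B" "e > 0"
    and small: "{\<beta>\<in>OCdual. \<forall>f\<in>B. cmod (\<beta> f - 0) \<le> e} \<subseteq> {\<alpha> \<in> OCdual. p \<alpha> \<in> {..<1}}"
    by blast
  have "p \<beta> \<le> t / e" if \<beta>: "\<beta> \<in> OCdual" "t > 0" "\<forall>f\<in>B. cmod (\<beta> f) \<le> t" for \<beta> t
  proof -
    define c where "c = e / t"
    have "c > 0"
      using B(2) \<beta>(2) by (simp add: c_def)
    have "cmod (dscale (of_real c) \<beta> f - 0) \<le> e" if "f \<in> B" for f
    proof -
      have "cmod (dscale (of_real c) \<beta> f) \<le> c * t"
        using \<beta>(3) that \<open>c > 0\<close> by (simp add: dscale_def norm_mult)
      then show ?thesis
        using \<beta>(2) by (simp add: c_def)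
    qed
    then have "dscale (of_real c) \<beta> \<in> {\<beta>\<in>OCdual. \<forall>f\<in>B. cmod (\<beta> f - 0) \<le> e}"
      using OCdual_dscale[OF \<beta>(1)] by simp
    then have "p (dscale (of_real c) \<beta>) < 1"
      using subsetD[OF small] by simp
    moreover have "p (dscale (of_real c) \<beta>) = cmod (of_real c) * p \<beta>"
      using assms(1) \<beta>(1) unfolding dual_seminorm_def by blast
    ultimately have "c * p \<beta> < 1"
      using \<open>c > 0\<close> by simp
    then show ?thesis
      using B(2) \<beta>(2) by (simp add: c_def field_simps)
  qed
  with B show ?thesis
    using that by blast
qed

lemma cont_seminorm_coeff_functional_decay:
  assumes "dual_seminorm p" "cont_seminorm p"
  obtains M where "M > 0" "\<And>n. p (coeff_functional n) \<le> M * (1/2) ^ nat \<bar>n\<bar>"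
proof -
  obtain B e where B: "compactin OC_top B" "e > 0"
    and bounded: "\<And>\<beta> t. \<beta> \<in> OCdual \<Longrightarrow> t > 0 \<Longrightarrow> (\<forall>f\<in>B. cmod (\<beta> f) \<le> t) \<Longrightarrow> p \<beta> \<le> t / e"
    using cont_seminorm_bounded_on_compactin[OF assms] by blast
  obtain M where M: "\<forall>f\<in>B. \<forall>z\<in>sphere 0 2 \<union> sphere 0 (1/2). cmod (f z) \<le> M"
    using compactin_OC_top_bounded_on_compact[OF B(1), of "sphere 0 2 \<union> sphere 0 (1/2)"]
    by (auto simp: compact_Un)
  define M' where "M' = \<bar>M\<bar> + 1"
  have "M' > 0"
    by (simp add: M'_def add_nonneg_pos)
  have "p (coeff_functional n) \<le> M' * (1/2) ^ nat \<bar>n\<bar> / e" for n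
  proof (rule bounded[OF coeff_functional_in_OCdual])
    show "M' * (1/2) ^ nat \<bar>n\<bar> > 0"
      using \<open>M' > 0\<close> by simp
    show "\<forall>f\<in>B. cmod (coeff_functional n f) \<le> M' * (1/2) ^ nat \<bar>n\<bar>"
    proof
      fix f
      assume "f \<in> B"
      then have "f \<in> OC"
        using compactin_subset_topspace[OF B(1)] topspace_OC_top by blast
      have "cmod (laurent_coeff f n) \<le> M * (1/2) ^ nat \<bar>n\<bar>"
        using M \<open>f \<in> B\<close> by (intro norm_laurent_coeff_le_geometric \<open>f \<in> OC\<close>) auto
      also have "\<dots> \<le> M' * (1/2) ^ nat \<bar>n\<bar>"
        by (intro mult_right_mono) (auto simp: M'_def)
      finally show "cmod (coeff_functional n f) \<le> M' * (1/2) ^ nat \<bar>n\<bar>"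
        using \<open>f \<in> OC\<close> by (simp add: coeff_functional_def)
    qed
  qed
  then show ?thesis
    using \<open>M' > 0\<close> B(2) by (intro that[of "M' / e"]) simp_all
qed

lemma coeff_functional_vanishes:
  assumes p: "dual_seminorm p" "submultiplicative p" "cont_seminorm p"
  obtains N where "\<And>n. n \<notin> {- int N..int N} \<Longrightarrow> p (coeff_functional n) = 0"
proof -
  obtain M where "M > 0" and decay: "\<And>n. p (coeff_functional n) \<le> M * (1/2) ^ nat \<bar>n\<bar>"
    using cont_seminorm_coeff_functional_decay[OF p(1,3)] by blast
  obtain N where N: "(1/2::real) ^ N < 1 / M"
    using real_arch_pow_inv[of "1 / M" "1/2"] \<open>M > 0\<close> by auto
  \<comment> \<open>an idempotent with \<open>p < 1\<close> has \<open>p = 0\<close>\<close>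
  have "p (coeff_functional n) = 0" if "n \<notin> {- int N..int N}" for n
  proof (rule ccontr)
    let ?x = "p (coeff_functional n)"
    assume "?x \<noteq> 0"
    moreover have "?x \<ge> 0"
      using p(1) coeff_functional_in_OCdual unfolding dual_seminorm_def by blast
    ultimately have "?x > 0"
      by simp
    have "(1/2::real) ^ nat \<bar>n\<bar> \<le> (1/2) ^ N"
      using that by (intro power_decreasing) auto
    then have "M * (1/2) ^ nat \<bar>n\<bar> \<le> M * (1/2) ^ N"
      by (rule mult_left_mono) (use \<open>M > 0\<close> in simp)
    also have "\<dots> < 1"
      using N \<open>M > 0\<close> by (simp add: pos_less_divide_eq mult.commute)
    finally have "M * (1/2) ^ nat \<bar>n\<bar> < 1" .
    then have "?x < 1"
      using decay[of n] by linarith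
    then have "?x * ?x < ?x"
      using \<open>?x > 0\<close> by simp
    moreover have "?x \<le> ?x * ?x"
      using p(2) coeff_functional_in_OCdual conv_coeff_functional_self[of n]
      unfolding submultiplicative_def by metis
    ultimately show False
      by simp
  qed
  then show ?thesis
    using that by blast
qed

lemma OCdual_laurent_truncation_error:
  assumes \<alpha>: "\<alpha> \<in> OCdual"
  obtains C r R where "C > 0" "r > 0" "R > 0"
    "\<And>f M k. f \<in> OC \<Longrightarrow> (\<And>w. cmod w = r \<Longrightarrow> cmod (f w) \<le> M) \<Longrightarrow> (\<And>w. cmod w = R \<Longrightarrow> cmod (f w) \<le> M) \<Longrightarrow>
      cmod (\<alpha> f - (\<Sum>n\<in>{- int k - 1..int k}. coef \<alpha> n * coeff_functional n f)) \<le> C * (3 * M * (1/2) ^ Suc k)"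
proof -
  obtain K C where K: "compact K" "K \<subseteq> - {0}" "C > 0"
    and bound: "\<And>g t. g \<in> OC \<Longrightarrow> t \<ge> 0 \<Longrightarrow> (\<forall>z\<in>K. cmod (g z) \<le> t) \<Longrightarrow> cmod (\<alpha> g) \<le> C * t"
    using OCdual_bounded_on_compact[OF \<alpha>] by blast
  obtain r R where "r > 0" "R > 0" and annulus: "\<And>z. z \<in> K \<Longrightarrow> 2 * r \<le> cmod z \<and> cmod z \<le> R / 2"
    using compact_subset_annulus[OF K(1,2)] by blast
  have "cmod (\<alpha> f - (\<Sum>n\<in>{- int k - 1..int k}. coef \<alpha> n * coeff_functional n f)) \<le> C * (3 * M * (1/2) ^ Suc k)"
    if f: "f \<in> OC" and Mr: "\<And>w. cmod w = r \<Longrightarrow> cmod (f w) \<le> M"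
      and MR: "\<And>w. cmod w = R \<Longrightarrow> cmod (f w) \<le> M" for f M k
  proof -
    have "(\<Sum>n\<in>{- int k - 1..int k}. coef \<alpha> n * coeff_functional n f)
        = (\<Sum>n\<in>{- int k - 1..int k}. laurent_coeff f n * coef \<alpha> n)"
      using f by (simp add: coeff_functional_def mult.commute)
    then show ?thesis
      using linear_on_OC_laurent_approx[OF OCdual_linear_on_OC[OF \<alpha>] bound annulus \<open>r > 0\<close> f Mr MR]
      by (simp only:)
  qed
  with K(3) \<open>r > 0\<close> \<open>R > 0\<close> show ?thesis
    by (rule that)
qed

lemma cont_seminorm_laurent_truncation_bound:
  assumes p: "dual_seminorm p" "cont_seminorm p" and \<alpha>: "\<alpha> \<in> OCdual"
  obtains D where "\<And>k. p (\<lambda>f. \<alpha> f - (\<Sum>n\<in>{- int k - 1..int k}. coef \<alpha> n * coeff_functional n f))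
    \<le> D * (1/2) ^ Suc k"
proof -
  obtain B e where B: "compactin OC_top B" "e > 0"
    and bounded: "\<And>\<beta> t. \<beta> \<in> OCdual \<Longrightarrow> t > 0 \<Longrightarrow> (\<forall>f\<in>B. cmod (\<beta> f) \<le> t) \<Longrightarrow> p \<beta> \<le> t / e"
    using cont_seminorm_bounded_on_compactin[OF p] by blast
  obtain C r R where "C > 0" "r > 0" "R > 0"
    and error: "\<And>f M k. f \<in> OC \<Longrightarrow> (\<And>w. cmod w = r \<Longrightarrow> cmod (f w) \<le> M) \<Longrightarrow>
      (\<And>w. cmod w = R \<Longrightarrow> cmod (f w) \<le> M) \<Longrightarrow>
      cmod (\<alpha> f - (\<Sum>n\<in>{- int k - 1..int k}. coef \<alpha> n * coeff_functional n f)) \<le> C * (3 * M * (1/2) ^ Suc k)"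
    using OCdual_laurent_truncation_error[OF \<alpha>] by blast
  obtain M where M: "\<forall>f\<in>B. \<forall>z\<in>sphere 0 r \<union> sphere 0 R. cmod (f z) \<le> M"
    using compactin_OC_top_bounded_on_compact[OF B(1), of "sphere 0 r \<union> sphere 0 R"]
      \<open>r > 0\<close> \<open>R > 0\<close> by (auto simp: compact_Un)
  define D where "D = (C * (3 * \<bar>M\<bar>) + 1) / e"
  have "p (\<lambda>f. \<alpha> f - (\<Sum>n\<in>{- int k - 1..int k}. coef \<alpha> n * coeff_functional n f))
    \<le> D * (1/2) ^ Suc k" for k
  proof -
    let ?S = "\<lambda>f. \<Sum>n\<in>{- int k - 1..int k}. coef \<alpha> n * coeff_functional n f"
    have "(\<lambda>f. \<alpha> f - ?S f) \<in> OCdual"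
      by (intro OCdual_diff \<alpha> OCdual_sum) (auto intro: coeff_functional_in_OCdual)
    moreover have "(C * (3 * \<bar>M\<bar>) + 1) * (1/2) ^ Suc k > 0"
      using \<open>C > 0\<close> by (simp add: add_nonneg_pos)
    moreover have "cmod (\<alpha> f - ?S f) \<le> (C * (3 * \<bar>M\<bar>) + 1) * (1/2) ^ Suc k" if "f \<in> B" for f
    proof -
      have "f \<in> OC"
        using compactin_subset_topspace[OF B(1)] topspace_OC_top that by blast
      moreover have "cmod (f w) \<le> \<bar>M\<bar>" if "cmod w = r \<or> cmod w = R" for w
      proof -
        have "w \<in> sphere 0 r \<union> sphere 0 R"
          using that by auto
        then have "cmod (f w) \<le> M"
          using M \<open>f \<in> B\<close> by blast
        then show ?thesis
          by linarith
      qed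
      ultimately have "cmod (\<alpha> f - ?S f) \<le> C * (3 * \<bar>M\<bar> * (1/2) ^ Suc k)"
        by (intro error) auto
      also have "\<dots> \<le> (C * (3 * \<bar>M\<bar>) + 1) * (1/2) ^ Suc k"
        by (simp add: algebra_simps)
      finally show ?thesis .
    qed
    ultimately have "p (\<lambda>f. \<alpha> f - ?S f) \<le> (C * (3 * \<bar>M\<bar>) + 1) * (1/2) ^ Suc k / e"
      by (intro bounded) auto
    then show ?thesis
      by (simp add: D_def)
  qed
  then show ?thesis
    by (rule that)
qed

lemma submultiplicative_cont_seminorm_le_normN:
  assumes p: "dual_seminorm p" "submultiplicative p" "cont_seminorm p"
  shows "\<exists>N M. M > 0 \<and> (\<forall>\<alpha>\<in>OCdual. p \<alpha> \<le> M * normN N \<alpha>)"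
proof -
  obtain N where vanish: "\<And>n. n \<notin> {- int N..int N} \<Longrightarrow> p (coeff_functional n) = 0"
    using coeff_functional_vanishes[OF p] by blast
  define M where "M = 1 + (\<Sum>n\<in>{- int N..int N}. p (coeff_functional n))"
  have nonneg: "p (coeff_functional n) \<ge> 0" for n
    using p(1) coeff_functional_in_OCdual unfolding dual_seminorm_def by blast
  then have "M > 0"
    by (simp add: M_def sum_nonneg add_pos_nonneg)
  have le_M: "p (coeff_functional n) \<le> M" if "n \<in> {- int N..int N}" for n
    using member_le_sum[of n "{- int N..int N}" "\<lambda>n. p (coeff_functional n)"] that nonneg
    by (simp add: M_def)
  have "p \<alpha> \<le> M * normN N \<alpha>" if \<alpha>: "\<alpha> \<in> OCdual" for \<alpha>
  proof -
    obtain D where D: "\<And>k. p (\<lambda>f. \<alpha> f - (\<Sum>n\<in>{- int k - 1..int k}. coef \<alpha> n * coeff_functional n f))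
        \<le> D * (1/2) ^ Suc k"
      using cont_seminorm_laurent_truncation_bound[OF p(1,3) \<alpha>] by blast
    have "p \<alpha> - M * normN N \<alpha> \<le> D * (1/2) ^ Suc k" if "k \<ge> N" for k
    proof -
      let ?S = "\<lambda>f. \<Sum>n\<in>{- int k - 1..int k}. coef \<alpha> n * coeff_functional n f"
      have "?S \<in> OCdual"
        by (intro OCdual_sum) (auto intro: coeff_functional_in_OCdual)
      have "p ?S \<le> (\<Sum>n\<in>{- int k - 1..int k}. cmod (coef \<alpha> n) * p (coeff_functional n))"
        by (rule dual_seminorm_sum_le[OF p(1)]) (auto intro: coeff_functional_in_OCdual)
      also have "\<dots> = (\<Sum>n\<in>{- int N..int N}. cmod (coef \<alpha> n) * p (coeff_functional n))"
        by (rule sum.mono_neutral_right) (use that vanish in auto)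
      also have "\<dots> \<le> (\<Sum>n\<in>{- int N..int N}. cmod (coef \<alpha> n) * M)"
        by (intro sum_mono mult_left_mono le_M) auto
      also have "\<dots> = M * normN N \<alpha>"
        by (simp add: normN_def sum_distrib_left mult.commute)
      finally have "p ?S \<le> M * normN N \<alpha>" .
      moreover have "p \<alpha> \<le> p ?S + p (\<lambda>f. \<alpha> f - ?S f)"
        by (rule dual_seminorm_le_add_diff[OF p(1) \<alpha> \<open>?S \<in> OCdual\<close>])
      ultimately show ?thesis
        using D[of k] by linarith
    qed
    then have "p \<alpha> - M * normN N \<alpha> \<le> 0"
      by (rule nonpos_if_le_geometric)
    then show ?thesis
      by simp
  qed
  with \<open>M > 0\<close> show ?thesis
    by blast
qed

theorem mainTheorem15:
  shows "(\<forall>N. dual_seminorm (normN N) \<and> submultiplicative (normN N) \<and> cont_seminorm (normN N))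
    \<and> (\<forall>p. dual_seminorm p \<and> submultiplicative p \<and> cont_seminorm p \<longrightarrow>
          (\<exists>N M. M > 0 \<and> (\<forall>\<alpha>\<in>OCdual. p \<alpha> \<le> M * normN N \<alpha>)))"
  using dual_seminorm_normN submultiplicative_normN cont_seminorm_normN
    submultiplicative_cont_seminorm_le_normN
  by blast

end
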